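(* Let $\Lambda$ satisfy (RC). There exists a bounded linear operator $I^{\rm h}_2:\dot{\mathscr U}^{1,2}(\Lambda)\to\dot{\mathscr U}^{1,2}(\Lambda^{\rm h})$ and $C>0$ such that $\|DI^{\rm h}_2u\|_{\ell^2_{\mathcal N}(\Lambda^{\rm h})}\le C\|Du\|_{\ell^2_{\mathcal N}(\Lambda)}$ and $I^{\rm h}_2u(\ell)=u(\ell)$ for all $|\ell|>R_{\rm def}$ and all $u\in\dot{\mathscr U}^{1,2}(\Lambda)$. Moreover, there is $c_0\in(0,1]$ such that for every $r>0$ there exists $R\ge r$ with $$\sum_{\ell\in\Lambda^{\rm h}\cap B_r}|DI^{\rm h}_2u(\ell)|_{\mathfrak w,1}\le C\sum_{\ell\in\Lambda\cap B_R}|Du(\ell)|_{\tilde{\mathfrak w},1}$$ for all $\mathfrak w\in\mathscr L_1$ and $u\in\dot{\mathscr U}^{1,2}(\Lambda)$, where $\tilde{\mathfrak w}(t):=\mathfrak w(c_0t)$ (which lies in $\mathscr L_1$).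
   Context: Let $d\in\{2,3\}$, $\mathsf d_s\in\{2,3\}$. $B_R$ is the open ball of radius $R$ at $0$. $A\in\mathbb R^{d\times d}$ nonsingular, $\Lambda^{\rm h}:=A\mathbb Z^d$. A set $\Lambda\subset\mathbb R^d$ satisfies (RC) if there is $R_{\rm def}>0$ with $\Lambda\setminus B_{R_{\rm def}}=\Lambda^{\rm h}\setminus B_{R_{\rm def}}$ and $\Lambda\cap B_{R_{\rm def}}$ finite. For $\Lambda'\in\{\Lambda,\Lambda^{\rm h}\}$ and $\ell\in\Lambda'$: $\Lambda'-\ell:=\{m-\ell:m\in\Lambda'\setminus\{\ell\}\}$; $\mathcal N(\ell)$ is the set of $m\in\Lambda'\setminus\{\ell\}$ for which some $a$ has $|a-\ell|=|a-m|\le|a-k|$ for all $k\in\Lambda'$. For $u:\Lambda'\to\mathbb R^{\mathsf d_s}$: $D_\rho u(\ell):=u(\ell+\rho)-u(\ell)$, $\|Du\|_{\ell^2_{\mathcal N}(\Lambda')}:=(\sum_\ell\sum_{\rho\in\mathcal N(\ell)-\ell}|D_\rho u(\ell)|^2)^{1/2}$, $\dot{\mathscr U}^{1,2}(\Lambda'):=\{u:\|Du\|_{\ell^2_{\mathcal N}(\Lambda')}<\infty\}$. $\mathscr L_1$ is the set of monotonically decreasing $\mathfrak w:[0,\infty)\to(0,\infty)$ with $\|\mathfrak w\|_{L^\infty}+\int_0^\infty r^{d}\mathfrak w(r)dr<\infty$, and $|Du(\ell)|_{\mathfrak w,1}:=\sum_{\rho\in\Lambda'-\ell}\mathfrak w(|\rho|)|D_\rho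 u(\ell)|$. *)

theory Defs
  imports "HOL-Analysis.Analysis"
begin

definition hom_lattice :: "real^'d^'d \<Rightarrow> (real^'d) set" where
  "hom_lattice A = range (\<lambda>z::int^'d. A *v (\<chi> i. real_of_int (z $ i)))"

definition RC :: "(real^'d) set \<Rightarrow> (real^'d) set \<Rightarrow> real \<Rightarrow> bool" where
  "RC Lam Lamh Rdef \<longleftrightarrow> Rdef > 0 \<and> Lam - ball 0 Rdef = Lamh - ball 0 Rdef
     \<and> finite (Lam \<inter> ball 0 Rdef)"

text \<open>Voronoi neighbours N(l) of a site l in the set Lam'.\<close>
definition nbrs :: "(real^'d) set \<Rightarrow> real^'d \<Rightarrow> (real^'d) set" where
  "nbrs Lam' l = {m \<in> Lam' - {l}. \<exists>a. dist a l = dist a m \<and> (\<forall>k\<in>Lam'. dist a l \<le> dist a k)}"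

definition nb_pairs :: "(real^'d) set \<Rightarrow> ((real^'d) \<times> (real^'d)) set" where
  "nb_pairs Lam' = {(l, m). l \<in> Lam' \<and> m \<in> nbrs Lam' l}"

definition Dnorm_sq_terms :: "(real^'d \<Rightarrow> real^'s) \<Rightarrow> (real^'d) \<times> (real^'d) \<Rightarrow> real" where
  "Dnorm_sq_terms u = (\<lambda>(l, m). (norm (u m - u l))^2)"

definition U12 :: "(real^'d) set \<Rightarrow> (real^'d \<Rightarrow> real^'s) set" where
  "U12 Lam' = {u. Dnorm_sq_terms u summable_on nb_pairs Lam'}"

definition Dnorm :: "(real^'d) set \<Rightarrow> (real^'d \<Rightarrow> real^'s) \<Rightarrow> real" where
  "Dnorm Lam' u = sqrt (infsum (Dnorm_sq_terms u) (nb_pairs Lam'))"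

definition wnorm1 :: "(real^'d) set \<Rightarrow> (real \<Rightarrow> real) \<Rightarrow> (real^'d \<Rightarrow> real^'s) \<Rightarrow> real^'d \<Rightarrow> ennreal" where
  "wnorm1 Lam' w u l = (\<Sum>\<^sub>\<infinity> m \<in> Lam' - {l}. ennreal (w (norm (m - l)) * norm (u m - u l)))"

definition L1w :: "nat \<Rightarrow> (real \<Rightarrow> real) set" where
  "L1w d = {w. (\<forall>r\<ge>0. w r > 0) \<and> (\<forall>r s. 0 \<le> r \<longrightarrow> r \<le> s \<longrightarrow> w s \<le> w r)
     \<and> (\<exists>B. \<forall>r\<ge>0. \<bar>w r\<bar> \<le> B)
     \<and> (\<lambda>r. r ^ d * w r) integrable_on {0..}}"

end

theory Submission
  imports Defs
begin

text \<open>The operator fills every defect site of \<open>\<Lambda>\<^sup>h\<close> that is missing from \<open>\<Lambda>\<close> with the value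
  of \<open>u\<close> at one fixed site \<open>p\<^sub>0 \<in> \<Lambda>\<close>. Outside a neighbourhood of the defect core the Voronoi
  neighbours in \<open>\<Lambda>\<close> and \<open>\<Lambda>\<^sup>h\<close> coincide, so only finitely many bonds of the energy change.
  Each changed bond is controlled by the energy of \<open>u\<close>, because any two sites of a locally
  finite set are joined by a chain of Voronoi neighbours (move greedily towards the target).
  For the weighted estimate, the lattice is \<open>\<delta>\<close>-separated and the defect core is bounded, so
  \<open>|p\<^sub>0 - l| \<le> |m - l| + M\<close> whenever \<open>m\<close> is a defect; rescaling the weight by
  \<open>c\<^sub>0 = \<delta> / (\<delta> + M)\<close> absorbs the replacement of \<open>m\<close> by \<open>p\<^sub>0\<close>.\<close>

definition defect_extension :: "'a set \<Rightarrow> 'a \<Rightarrow> ('a \<Rightarrow> 'b) \<Rightarrow> 'a \<Rightarrow> 'b" where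
  "defect_extension L p0 u x = (if x \<in> L then u x else u p0)"

lemma invertible_matrix_inverse:
  fixes A :: "real^'d^'d"
  assumes "invertible A"
  obtains B where "\<And>x. A *v (B *v x) = x" "\<And>x. B *v (A *v x) = x"
  using assms unfolding invertible_def
  by (metis matrix_vector_mul_assoc matrix_vector_mul_lid)

lemma matrix_vector_mult_bounded:
  fixes A :: "real^'d^'d"
  obtains K where "K > 0" "\<And>x. norm (A *v x) \<le> K * norm x"
  using bounded_linear.pos_bounded[OF matrix_vector_mul_bounded_linear[of A]]
  by (metis mult.commute)

lemma hom_lattice_iff: "x \<in> hom_lattice A \<longleftrightarrow> (\<exists>z::int^'d. x = A *v (\<chi> i. real_of_int (z $ i)))"
  unfolding hom_lattice_def by auto

lemma hom_lattice_covering: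
  fixes A :: "real^'d^'d"
  assumes "invertible A"
  obtains \<rho> where "\<rho> > 0" "\<And>a. \<exists>k\<in>hom_lattice A. dist a k \<le> \<rho>"
proof -
  obtain B where B: "\<And>x. A *v (B *v x) = x" using invertible_matrix_inverse[OF assms] by metis
  obtain K where K: "K > 0" "\<And>x. norm (A *v x) \<le> K * norm x" using matrix_vector_mult_bounded by metis
  have "\<exists>k\<in>hom_lattice A. dist a k \<le> K * CARD('d)" for a
  proof -
    define y where "y = B *v a"
    define zr :: "real^'d" where "zr = (\<chi> i. real_of_int (floor (y $ i)))"
    have k: "A *v zr \<in> hom_lattice A"
      unfolding hom_lattice_iff zr_def by (intro exI[of _ "\<chi> i. floor (y $ i)"]) simp
    have "a - A *v zr = A *v (y - zr)" using B y_def by (simp add: matrix_vector_mult_diff_distrib)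
    hence "dist a (A *v zr) \<le> K * norm (y - zr)" using K(2) by (simp add: dist_norm)
    also have "norm (y - zr) \<le> (\<Sum>i\<in>UNIV. \<bar>(y - zr) $ i\<bar>)" by (rule norm_le_l1_cart)
    also have "\<dots> \<le> (\<Sum>i\<in>(UNIV::'d set). 1)"
      by (rule sum_mono) (simp add: zr_def, linarith)
    finally have "dist a (A *v zr) \<le> K * CARD('d)" using K(1) by (simp add: mult_left_mono)
    thus ?thesis using k by blast
  qed
  thus ?thesis using that[of "K * CARD('d)"] K(1) by simp
qed

lemma hom_lattice_separated:
  fixes A :: "real^'d^'d"
  assumes "invertible A"
  obtains \<delta> where "\<delta> > 0"
    "\<And>x y. x \<in> hom_lattice A \<Longrightarrow> y \<in> hom_lattice A \<Longrightarrow> x \<noteq> y \<Longrightarrow> \<delta> \<le> dist x y"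
proof -
  obtain B where B: "\<And>x. B *v (A *v x) = x" using invertible_matrix_inverse[OF assms] by metis
  obtain K where K: "K > 0" "\<And>x. norm (B *v x) \<le> K * norm x" using matrix_vector_mult_bounded by metis
  have "1 / K \<le> dist x y" if xy: "x \<in> hom_lattice A" "y \<in> hom_lattice A" "x \<noteq> y" for x y
  proof -
    obtain zx zy :: "int^'d" where zx: "x = A *v (\<chi> i. real_of_int (zx $ i))"
      and zy: "y = A *v (\<chi> i. real_of_int (zy $ i))" using xy(1,2) unfolding hom_lattice_iff by blast
    define v :: "real^'d" where "v = (\<chi> i. real_of_int (zx $ i - zy $ i))"
    have "(\<chi> i. real_of_int (zx $ i)) - (\<chi> i. real_of_int (zy $ i)) = v"
      by (simp add: v_def vec_eq_iff)
    hence diff: "x - y = A *v v" unfolding zx zy by (metis matrix_vector_mult_diff_distrib)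
    have "v \<noteq> 0" using xy(3) diff by auto
    then obtain i where "v $ i \<noteq> 0" by (metis vec_eq_iff zero_index)
    hence "1 \<le> \<bar>v $ i\<bar>" unfolding v_def by simp
    also have "\<dots> \<le> norm v" by (rule component_le_norm_cart)
    also have "norm v = norm (B *v (x - y))" using diff B by simp
    also have "\<dots> \<le> K * dist x y" using K(2) by (simp add: dist_norm)
    finally show ?thesis using K(1) by (simp add: field_simps)
  qed
  thus ?thesis using that[of "1/K"] K(1) by simp
qed

lemma finite_int_vec_box: "finite {z::int^'d. \<forall>i. z $ i \<in> {-M..M}}"
proof -
  have "{z::int^'d. \<forall>i. z $ i \<in> {-M..M}} \<subseteq> (\<lambda>f. \<chi> i. f i) ` (Pi\<^sub>E UNIV (\<lambda>_. {-M..M}))"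
  proof
    fix z :: "int^'d" assume "z \<in> {z. \<forall>i. z $ i \<in> {-M..M}}"
    hence "(\<lambda>i. z $ i) \<in> Pi\<^sub>E UNIV (\<lambda>_. {-M..M})" by auto
    thus "z \<in> (\<lambda>f. \<chi> i. f i) ` (Pi\<^sub>E UNIV (\<lambda>_. {-M..M}))" by (metis image_eqI vec_lambda_eta)
  qed
  thus ?thesis by (rule finite_subset) (intro finite_imageI finite_PiE; simp)
qed

lemma hom_lattice_locally_finite:
  fixes A :: "real^'d^'d"
  assumes "invertible A"
  shows "finite (hom_lattice A \<inter> cball 0 R)"
proof -
  obtain B where B: "\<And>x. B *v (A *v x) = x" using invertible_matrix_inverse[OF assms] by metis
  obtain K where K: "K > 0" "\<And>x. norm (B *v x) \<le> K * norm x" using matrix_vector_mult_bounded by metis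
  define M where "M = ceiling (K * R)"
  have "hom_lattice A \<inter> cball 0 R
      \<subseteq> (\<lambda>z. A *v (\<chi> i. real_of_int (z $ i))) ` {z::int^'d. \<forall>i. z $ i \<in> {-M..M}}"
  proof
    fix x assume x: "x \<in> hom_lattice A \<inter> cball 0 R"
    then obtain z :: "int^'d" where z: "x = A *v (\<chi> i. real_of_int (z $ i))"
      unfolding hom_lattice_def by blast
    have "z $ i \<in> {-M..M}" for i
    proof -
      have "\<bar>real_of_int (z $ i)\<bar> = \<bar>(\<chi> i. real_of_int (z $ i)) $ i\<bar>" by simp
      also have "\<dots> \<le> norm (\<chi> i. real_of_int (z $ i))" by (rule component_le_norm_cart)
      also have "\<dots> = norm (B *v x)" using B z by simp
      also have "\<dots> \<le> K * norm x" by (rule K(2))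
      also have "\<dots> \<le> K * R" using x K(1) by (intro mult_left_mono) auto
      finally show ?thesis unfolding M_def by (simp add: abs_le_iff) linarith
    qed
    thus "x \<in> (\<lambda>z. A *v (\<chi> i. real_of_int (z $ i))) ` {z. \<forall>i. z $ i \<in> {-M..M}}" using z by blast
  qed
  thus ?thesis by (rule finite_subset) (intro finite_imageI finite_int_vec_box)
qed

lemma locally_finite_Int_cball:
  fixes L :: "'a::real_normed_vector set"
  assumes "\<And>R. finite (L \<inter> cball 0 R)"
  shows "finite (L \<inter> cball c r)"
proof (rule finite_subset[OF _ assms[of "norm c + r"]])
  show "L \<inter> cball c r \<subseteq> L \<inter> cball 0 (norm c + r)"
  proof
    fix x assume "x \<in> L \<inter> cball c r"
    thus "x \<in> L \<inter> cball 0 (norm c + r)"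
      using norm_triangle_sub[of x c] by (auto simp: dist_norm norm_minus_commute)
  qed
qed

lemma dist_ray_le_iff:
  fixes p v k :: "'a::real_inner"
  shows "dist (p + t *\<^sub>R v) p \<le> dist (p + t *\<^sub>R v) k \<longleftrightarrow> 2 * t * inner v (k - p) \<le> inner (k - p) (k - p)"
proof -
  have "p + t *\<^sub>R v - k = t *\<^sub>R v - (k - p)" by (simp add: algebra_simps)
  thus ?thesis unfolding dist_norm norm_le
    by (simp add: inner_diff_left inner_diff_right inner_commute algebra_simps)
qed

lemma dist_ray_eq_iff:
  fixes p v k :: "'a::real_inner"
  shows "dist (p + t *\<^sub>R v) p = dist (p + t *\<^sub>R v) k \<longleftrightarrow> 2 * t * inner v (k - p) = inner (k - p) (k - p)"
proof -
  have "p + t *\<^sub>R v - k = t *\<^sub>R v - (k - p)" by (simp add: algebra_simps)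
  thus ?thesis unfolding dist_norm norm_eq
    by (simp add: inner_diff_left inner_diff_right inner_commute algebra_simps)
qed

text \<open>Only sites \<open>k\<close> in the ball of radius \<open>|v|\<close> around \<open>p\<close> on the side of \<open>v\<close> need to be checked:
  for all others Cauchy--Schwarz and \<open>t \<le> 1/2\<close> give the inequality.\<close>
lemma dist_ray_le_if_near_le:
  fixes p v k :: "'a::real_inner"
  assumes "0 \<le> t" "t \<le> 1/2"
    and near: "0 < inner v (k - p) \<Longrightarrow> norm (k - p) \<le> norm v \<Longrightarrow> 2 * t * inner v (k - p) \<le> inner (k - p) (k - p)"
  shows "dist (p + t *\<^sub>R v) p \<le> dist (p + t *\<^sub>R v) k"
  unfolding dist_ray_le_iff
proof (cases "0 < inner v (k - p) \<and> norm (k - p) \<le> norm v")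
  case False
  show "2 * t * inner v (k - p) \<le> inner (k - p) (k - p)"
  proof (cases "0 < inner v (k - p)")
    case True
    have "2 * t * inner v (k - p) \<le> inner v (k - p)"
      using mult_right_mono[of "2 * t" 1 "inner v (k - p)"] assms(2) True by simp
    also have "\<dots> \<le> norm v * norm (k - p)" by (rule norm_cauchy_schwarz)
    also have "\<dots> \<le> norm (k - p) * norm (k - p)" using False True by (intro mult_right_mono) auto
    also have "\<dots> = inner (k - p) (k - p)" by (simp add: dot_square_norm power2_eq_square)
    finally show ?thesis .
  next
    case False
    thus ?thesis using assms(1) by (smt (verit) inner_ge_zero mult_nonneg_nonpos zero_le_mult_iff)
  qed
qed (use near in auto)

lemma exists_nbr_closer:
  fixes L :: "(real^'d) set"
  assumes lf: "\<And>R. finite (L \<inter> cball 0 R)" and q: "q \<in> L" and "p \<noteq> q"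
  shows "\<exists>k\<in>nbrs L p. dist k q < dist p q"
proof -
  define v where "v = q - p"
  define S where "S = {k \<in> L. 0 < inner v (k - p) \<and> norm (k - p) \<le> norm v}"
  \<comment> \<open>the ray \<open>p + t v\<close> meets the bisector of \<open>p\<close> and \<open>k\<close> at parameter \<open>t k\<close>\<close>
  define t where "t k = inner (k - p) (k - p) / (2 * inner v (k - p))" for k
  have v: "inner v v > 0" using \<open>p \<noteq> q\<close> v_def by simp
  have qS: "q \<in> S" unfolding S_def using q v v_def by simp
  have "S \<subseteq> L \<inter> cball p (norm v)" unfolding S_def by (auto simp: dist_norm norm_minus_commute)
  hence "finite S" using locally_finite_Int_cball[OF lf] finite_subset by blast
  then obtain ks where ks: "ks \<in> S" and ks_min: "\<And>k. k \<in> S \<Longrightarrow> t ks \<le> t k"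
    using qS by (metis arg_min_if_finite(1,2) empty_iff not_le)
  have ksp: "ks \<in> L" "0 < inner v (ks - p)" using ks S_def by auto
  have t_nonneg: "0 \<le> t ks" unfolding t_def using ksp(2) by simp
  have t_half: "t ks \<le> 1/2" using ks_min[OF qS] v unfolding t_def v_def by simp
  define a where "a = p + t ks *\<^sub>R v"
  have "dist a p = dist a ks" unfolding a_def dist_ray_eq_iff t_def using ksp(2) by simp
  moreover have "dist a p \<le> dist a k" if "k \<in> L" for k
    unfolding a_def
  proof (rule dist_ray_le_if_near_le[OF t_nonneg t_half])
    assume "0 < inner v (k - p)" "norm (k - p) \<le> norm v"
    hence "k \<in> S" "0 < inner v (k - p)" using that S_def by auto
    hence "2 * t ks * inner v (k - p) \<le> 2 * t k * inner v (k - p)"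
      using ks_min by (intro mult_right_mono) auto
    thus "2 * t ks * inner v (k - p) \<le> inner (k - p) (k - p)" using \<open>0 < inner v (k - p)\<close> by (simp add: t_def)
  qed
  ultimately have "ks \<in> nbrs L p" unfolding nbrs_def using ksp by auto
  have "inner (ks - p) (ks - p) \<le> inner v (ks - p)"
    using t_half ksp(2) unfolding t_def by (simp add: field_simps)
  moreover have "q = p + v" unfolding v_def by simp
  hence "inner (ks - q) (ks - q) = inner (ks - p) (ks - p) - 2 * inner v (ks - p) + inner v v"
    "inner (p - q) (p - q) = inner v v"
    by (simp_all add: inner_diff_left inner_diff_right inner_add_left inner_add_right
        inner_commute algebra_simps)
  ultimately have "inner (ks - q) (ks - q) < inner (p - q) (p - q)"
    using ksp(2) by linarith
  hence "dist ks q < dist p q" unfolding dist_norm norm_lt .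
  thus ?thesis using \<open>ks \<in> nbrs L p\<close> by blast
qed

lemma Dnorm_nonneg: "Dnorm L u \<ge> 0"
  unfolding Dnorm_def by (simp add: infsum_nonneg Dnorm_sq_terms_def split: prod.splits)

lemma Dnorm_squared: "(Dnorm L u)\<^sup>2 = infsum (Dnorm_sq_terms u) (nb_pairs L)"
  unfolding Dnorm_def by (simp add: infsum_nonneg Dnorm_sq_terms_def split: prod.splits)

lemma nb_pair_le_Dnorm:
  assumes "(p, k) \<in> nb_pairs L" and "u \<in> U12 L"
  shows "norm (u k - u p) \<le> Dnorm L u"
proof -
  have "infsum (Dnorm_sq_terms u) {(p, k)} \<le> infsum (Dnorm_sq_terms u) (nb_pairs L)"
    using assms by (intro infsum_mono_neutral) (auto simp: Dnorm_sq_terms_def U12_def)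
  thus ?thesis unfolding Dnorm_def by (simp add: real_le_rsqrt Dnorm_sq_terms_def)
qed

lemma Dnorm_bounds_difference:
  fixes L :: "(real^'d) set"
  assumes lf: "\<And>R. finite (L \<inter> cball 0 R)" and q: "q \<in> L"
  shows "p \<in> L \<Longrightarrow> \<exists>N. \<forall>u::real^'d \<Rightarrow> real^'s. u \<in> U12 L \<longrightarrow> norm (u p - u q) \<le> N * Dnorm L u"
proof (induction "card {k \<in> L. dist k q < dist p q}" arbitrary: p rule: less_induct)
  case less
  show ?case
  proof (cases "p = q")
    case False
    obtain k where k: "k \<in> nbrs L p" "dist k q < dist p q"
      using exists_nbr_closer[OF lf q False] by blast
    have kL: "k \<in> L" and pk: "(p, k) \<in> nb_pairs L"
      using k(1) less.prems unfolding nbrs_def nb_pairs_def by auto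
    have "{k \<in> L. dist k q < dist p q} \<subseteq> L \<inter> cball q (dist p q)" by (auto simp: dist_commute)
    hence "finite {k \<in> L. dist k q < dist p q}" using locally_finite_Int_cball[OF lf] finite_subset by blast
    moreover have "{k' \<in> L. dist k' q < dist k q} \<subset> {k \<in> L. dist k q < dist p q}"
      using k(2) kL by auto
    ultimately have "card {k' \<in> L. dist k' q < dist k q} < card {k \<in> L. dist k q < dist p q}"
      by (meson psubset_card_mono)
    then obtain N where N: "\<And>u::real^'d \<Rightarrow> real^'s. u \<in> U12 L \<Longrightarrow> norm (u k - u q) \<le> N * Dnorm L u"
      using less.hyps kL by blast
    have "norm (u p - u q) \<le> (N + 1) * Dnorm L u" if u: "u \<in> U12 L" for u :: "real^'d \<Rightarrow> real^'s"
    proof -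
      have "norm (u p - u q) \<le> norm (u k - u q) + norm (u k - u p)"
        by (metis norm_triangle_ineq4 diff_diff_eq2 add_diff_cancel_left' diff_add_cancel)
      also have "\<dots> \<le> N * Dnorm L u + Dnorm L u" using nb_pair_le_Dnorm[OF pk u] N[OF u] by simp
      finally show ?thesis by (simp add: algebra_simps)
    qed
    thus ?thesis by blast
  qed (intro exI[of _ 0]; simp)
qed

lemma RC_outside_iff:
  assumes "RC Lam Lh Rdef" and "Rdef \<le> norm x"
  shows "x \<in> Lam \<longleftrightarrow> x \<in> Lh"
proof -
  have "x \<in> Lam - ball 0 Rdef \<longleftrightarrow> x \<in> Lh - ball 0 Rdef" using assms(1) unfolding RC_def by simp
  thus ?thesis using assms(2) by simp
qed

lemma RC_defects:
  assumes rc: "RC Lam Lh Rdef" and lfh: "\<And>R. finite (Lh \<inter> cball 0 R)"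
  shows "Lh - Lam \<subseteq> ball 0 Rdef" "finite (Lh - Lam)"
proof -
  show sub: "Lh - Lam \<subseteq> ball 0 Rdef" using RC_outside_iff[OF rc] by (force simp: not_less)
  show "finite (Lh - Lam)" by (rule finite_subset[OF _ lfh[of Rdef]]) (use sub in auto)
qed

lemma RC_locally_finite:
  assumes rc: "RC Lam Lh Rdef" and lfh: "\<And>R. finite (Lh \<inter> cball 0 R)"
  shows "finite (Lam \<inter> cball 0 R)"
proof (rule finite_subset)
  show "Lam \<inter> cball 0 R \<subseteq> Lam \<inter> ball 0 Rdef \<union> Lh \<inter> cball 0 R"
    using RC_outside_iff[OF rc] by auto (meson not_less)
  show "finite (Lam \<inter> ball 0 Rdef \<union> Lh \<inter> cball 0 R)" using rc lfh unfolding RC_def by simp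
qed

lemma RC_site_exists:
  fixes Lam Lh :: "(real^'d) set"
  assumes rc: "RC Lam Lh Rdef" and cov: "\<And>a. \<exists>k\<in>Lh. dist a k \<le> \<rho>"
  obtains p0 where "p0 \<in> Lam"
proof -
  obtain a :: "real^'d" where a: "norm a = \<bar>Rdef\<bar> + \<bar>\<rho>\<bar> + 1"
    using vector_choose_size by (metis abs_ge_zero add_nonneg_nonneg zero_le_one)
  obtain k where "k \<in> Lh" "dist a k \<le> \<rho>" using cov by blast
  moreover have "norm a \<le> norm k + dist a k" using norm_triangle_sub[of a k] by (simp add: dist_norm)
  ultimately show ?thesis using RC_outside_iff[OF rc, of k] a that by force
qed

lemma nbr_witness:
  assumes "m \<in> nbrs L l" and cov: "\<And>a. \<exists>k\<in>L. dist a k \<le> \<rho>"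
  obtains a where "dist a l = dist a m" "\<And>k. k \<in> L \<Longrightarrow> dist a l \<le> dist a k" "dist a l \<le> \<rho>"
proof -
  obtain a where a: "dist a l = dist a m" "\<forall>k\<in>L. dist a l \<le> dist a k"
    using assms(1) unfolding nbrs_def by auto
  moreover obtain k where "k \<in> L" "dist a k \<le> \<rho>" using cov by blast
  ultimately show ?thesis using that by force
qed

lemma dist_nbr_le:
  assumes "m \<in> nbrs L l" and "\<And>a. \<exists>k\<in>L. dist a k \<le> \<rho>"
  shows "dist l m \<le> 2 * \<rho>"
proof -
  obtain a where "dist a l = dist a m" "dist a l \<le> \<rho>" using nbr_witness[OF assms] by metis
  thus ?thesis using dist_triangle[of l m a] by (simp add: dist_commute)
qed

text \<open>Far from the defect core the Voronoi witness of a neighbour pair of \<open>\<Lambda>\<^sup>h\<close> only sees sites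
  where \<open>\<Lambda>\<close> and \<open>\<Lambda>\<^sup>h\<close> agree.\<close>
lemma nb_pairs_far_from_defects:
  assumes rc: "RC Lam Lh Rdef" and cov: "\<And>a. \<exists>k\<in>Lh. dist a k \<le> \<rho>"
    and lm: "(l, m) \<in> nb_pairs Lh" and far: "norm l > Rdef + 2 * \<rho>"
  shows "(l, m) \<in> nb_pairs Lam" "l \<in> Lam" "m \<in> Lam"
proof -
  have l: "l \<in> Lh" and m: "m \<in> nbrs Lh l" using lm unfolding nb_pairs_def by auto
  obtain a where a: "dist a l = dist a m" "\<And>k. k \<in> Lh \<Longrightarrow> dist a l \<le> dist a k" "dist a l \<le> \<rho>"
    using nbr_witness[OF m cov] by metis
  have "\<rho> \<ge> 0" using a(3) zero_le_dist order_trans by blast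
  have mLh: "m \<in> Lh" "m \<noteq> l" using m unfolding nbrs_def by auto
  have na: "norm a \<ge> norm l - \<rho>"
    using a(3) norm_triangle_sub[of l a] by (simp add: dist_norm norm_minus_commute)
  have nm: "norm m \<ge> norm a - \<rho>"
    using a(1,3) norm_triangle_sub[of a m] by (simp add: dist_norm norm_minus_commute)
  show "l \<in> Lam" using RC_outside_iff[OF rc] l far \<open>\<rho> \<ge> 0\<close> by simp
  show mL: "m \<in> Lam" using RC_outside_iff[OF rc] mLh na nm far \<open>\<rho> \<ge> 0\<close> by simp
  have "dist a l \<le> dist a k" if k: "k \<in> Lam" for k
  proof (cases "norm k \<ge> Rdef")
    case True
    then show ?thesis using a(2) RC_outside_iff[OF rc] k by simp
  next
    case False
    have "norm a \<le> norm k + dist a k" using norm_triangle_sub[of a k] by (simp add: dist_norm)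
    thus ?thesis using False na far a(3) by simp
  qed
  thus "(l, m) \<in> nb_pairs Lam"
    unfolding nb_pairs_def nbrs_def using \<open>l \<in> Lam\<close> mL mLh(2) a(1) by auto
qed

lemma finite_nb_pairs_cball:
  assumes cov: "\<And>a. \<exists>k\<in>L. dist a k \<le> \<rho>" and lf: "\<And>R. finite (L \<inter> cball 0 R)"
  shows "finite {x \<in> nb_pairs L. norm (fst x) \<le> R}"
proof (rule finite_subset)
  show "{x \<in> nb_pairs L. norm (fst x) \<le> R} \<subseteq> (L \<inter> cball 0 R) \<times> (L \<inter> cball 0 (R + 2 * \<rho>))"
  proof
    fix x assume "x \<in> {x \<in> nb_pairs L. norm (fst x) \<le> R}"
    then obtain l m where lm: "x = (l, m)" "l \<in> L" "m \<in> nbrs L l" "norm l \<le> R"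
      unfolding nb_pairs_def by auto
    have "m \<in> L" using lm(3) unfolding nbrs_def by auto
    moreover have "dist l m \<le> 2 * \<rho>" by (rule dist_nbr_le[OF lm(3) cov])
    moreover have "norm m \<le> norm l + dist l m"
      using norm_triangle_sub[of m l] by (simp add: dist_norm norm_minus_commute)
    ultimately show "x \<in> (L \<inter> cball 0 R) \<times> (L \<inter> cball 0 (R + 2 * \<rho>))" using lm by auto
  qed
qed (intro finite_cartesian_product lf)

lemma infsum_finite_perturbation_le:
  fixes g h :: "'a \<Rightarrow> real"
  assumes S: "S = F \<union> N" "F \<inter> N = {}" "finite N" "F \<subseteq> B"
    and agree: "\<And>x. x \<in> F \<Longrightarrow> g x = h x"
    and h: "h summable_on B" "\<And>x. x \<in> B \<Longrightarrow> 0 \<le> h x"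
    and near: "\<And>x. x \<in> N \<Longrightarrow> g x \<le> K x * infsum h B"
  shows "g summable_on S" "infsum g S \<le> (1 + sum K N) * infsum h B"
proof -
  have hF: "h summable_on F" using summable_on_subset_banach[OF h(1) S(4)] .
  hence gF: "g summable_on F" using agree summable_on_cong by metis
  show "g summable_on S" unfolding S(1) using gF S(2,3) by (intro summable_on_Un_disjoint) auto
  have "infsum g S = infsum g F + infsum g N"
    unfolding S(1) using gF S(2,3) by (intro infsum_Un_disjoint) auto
  also have "\<dots> = infsum h F + sum g N" using agree S(3) by (simp cong: infsum_cong)
  also have "\<dots> \<le> infsum h B + sum K N * infsum h B"
  proof (rule add_mono)
    show "infsum h F \<le> infsum h B" using hF h S(4) by (intro infsum_mono_neutral) auto
    show "sum g N \<le> sum K N * infsum h B" unfolding sum_distrib_right by (rule sum_mono) (rule near)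
  qed
  finally show "infsum g S \<le> (1 + sum K N) * infsum h B" by (simp add: algebra_simps)
qed

lemma Dnorm_le_if_finitely_many_bonds_change:
  fixes u v :: "real^'d \<Rightarrow> real^'s"
  assumes u: "u \<in> U12 L" and N: "finite N" "N \<subseteq> nb_pairs L'" and F: "nb_pairs L' - N \<subseteq> nb_pairs L"
    and agree: "\<And>l m. (l, m) \<in> nb_pairs L' - N \<Longrightarrow> norm (v m - v l) = norm (u m - u l)"
    and near: "\<And>l m. (l, m) \<in> N \<Longrightarrow> norm (v m - v l) \<le> K (l, m) * Dnorm L u"
  shows "v \<in> U12 L'" "Dnorm L' v \<le> sqrt (1 + (\<Sum>x\<in>N. (K x)\<^sup>2)) * Dnorm L u"
proof -
  let ?g = "Dnorm_sq_terms v" and ?h = "Dnorm_sq_terms u"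
  have split: "nb_pairs L' = (nb_pairs L' - N) \<union> N" "(nb_pairs L' - N) \<inter> N = {}" using N(2) by auto
  have "?g x \<le> (K x)\<^sup>2 * infsum ?h (nb_pairs L)" if "x \<in> N" for x
  proof (cases x)
    case (Pair l m)
    have "?g x \<le> (K x * Dnorm L u)\<^sup>2"
      unfolding Pair Dnorm_sq_terms_def using near that Pair by (simp add: power_mono)
    thus ?thesis by (simp add: power_mult_distrib Dnorm_squared)
  qed
  moreover have "?h summable_on nb_pairs L" using u unfolding U12_def by simp
  moreover have "?g x = ?h x" if "x \<in> nb_pairs L' - N" for x
    using agree that unfolding Dnorm_sq_terms_def by (cases x) simp
  moreover have "0 \<le> ?h x" for x by (simp add: Dnorm_sq_terms_def split: prod.splits)
  ultimately have "?g summable_on nb_pairs L'"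
    and le: "infsum ?g (nb_pairs L') \<le> (1 + (\<Sum>x\<in>N. (K x)\<^sup>2)) * (Dnorm L u)\<^sup>2"
    using infsum_finite_perturbation_le[where K = "\<lambda>x. (K x)\<^sup>2", OF split N(1) F] unfolding Dnorm_squared
    by blast+
  thus "v \<in> U12 L'" unfolding U12_def by simp
  have "Dnorm L' v \<le> sqrt ((1 + (\<Sum>x\<in>N. (K x)\<^sup>2)) * (Dnorm L u)\<^sup>2)"
    using le unfolding Dnorm_def[of L'] by simp
  thus "Dnorm L' v \<le> sqrt (1 + (\<Sum>x\<in>N. (K x)\<^sup>2)) * Dnorm L u" by (simp add: real_sqrt_mult Dnorm_nonneg)
qed

lemma Dnorm_defect_extension:
  fixes Lam Lh :: "(real^'d) set"
  assumes rc: "RC Lam Lh Rdef" and cov: "\<And>a. \<exists>k\<in>Lh. dist a k \<le> \<rho>"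
    and lfh: "\<And>R. finite (Lh \<inter> cball 0 R)" and p0: "p0 \<in> Lam"
  obtains C where "\<And>(u::real^'d \<Rightarrow> real^'s) C'. u \<in> U12 Lam \<Longrightarrow> C \<le> C' \<Longrightarrow>
     defect_extension Lam p0 u \<in> U12 Lh \<and> Dnorm Lh (defect_extension Lam p0 u) \<le> C' * Dnorm Lam u"
proof -
  define Near where "Near = {x \<in> nb_pairs Lh. norm (fst x) \<le> Rdef + 2 * \<rho>}"
  define J where "J x = (if x \<in> Lam then x else p0)" for x
  have J: "defect_extension Lam p0 u x = u (J x)" "J x \<in> Lam" for u :: "real^'d \<Rightarrow> real^'s" and x
    unfolding defect_extension_def J_def using p0 by simp_all
  have "\<forall>x\<in>Near. \<exists>N. \<forall>u::real^'d \<Rightarrow> real^'s. u \<in> U12 Lam \<longrightarrow>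
      norm (u (J (snd x)) - u (J (fst x))) \<le> N * Dnorm Lam u"
  proof
    fix x
    show "\<exists>N. \<forall>u::real^'d \<Rightarrow> real^'s. u \<in> U12 Lam \<longrightarrow>
        norm (u (J (snd x)) - u (J (fst x))) \<le> N * Dnorm Lam u"
      using Dnorm_bounds_difference[OF RC_locally_finite[OF rc lfh] J(2)[of "fst x"] J(2)[of "snd x"]]
      by blast
  qed
  then obtain K where K: "\<And>x (u::real^'d \<Rightarrow> real^'s). x \<in> Near \<Longrightarrow> u \<in> U12 Lam \<Longrightarrow>
      norm (u (J (snd x)) - u (J (fst x))) \<le> K x * Dnorm Lam u"
    by (subst (asm) bchoice_iff) blast
  have far: "(l, m) \<in> nb_pairs Lam \<and> J l = l \<and> J m = m" if "(l, m) \<in> nb_pairs Lh - Near" for l m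
    using nb_pairs_far_from_defects[OF rc cov, of l m] that unfolding Near_def J_def by auto
  have bound: "defect_extension Lam p0 u \<in> U12 Lh
      \<and> Dnorm Lh (defect_extension Lam p0 u) \<le> sqrt (1 + (\<Sum>x\<in>Near. (K x)\<^sup>2)) * Dnorm Lam u"
    if u: "u \<in> U12 Lam" for u :: "real^'d \<Rightarrow> real^'s"
  proof -
    have fin: "finite Near" unfolding Near_def by (rule finite_nb_pairs_cball[OF cov lfh])
    have sub: "Near \<subseteq> nb_pairs Lh" unfolding Near_def by auto
    have sub': "nb_pairs Lh - Near \<subseteq> nb_pairs Lam"
    proof
      fix x assume "x \<in> nb_pairs Lh - Near"
      thus "x \<in> nb_pairs Lam" using far by (cases x) blast
    qed
    have agree: "norm (defect_extension Lam p0 u m - defect_extension Lam p0 u l) = norm (u m - u l)"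
      if "(l, m) \<in> nb_pairs Lh - Near" for l m using far[OF that] by (simp add: J(1))
    have near: "norm (defect_extension Lam p0 u m - defect_extension Lam p0 u l) \<le> K (l, m) * Dnorm Lam u"
      if "(l, m) \<in> Near" for l m using K[OF that u] by (simp add: J(1))
    show ?thesis using Dnorm_le_if_finitely_many_bonds_change[OF u fin sub sub' agree near] by blast
  qed
  show ?thesis
  proof (rule that)
    fix u :: "real^'d \<Rightarrow> real^'s" and C' assume "u \<in> U12 Lam" "sqrt (1 + (\<Sum>x\<in>Near. (K x)\<^sup>2)) \<le> C'"
    thus "defect_extension Lam p0 u \<in> U12 Lh \<and> Dnorm Lh (defect_extension Lam p0 u) \<le> C' * Dnorm Lam u"
      using bound[of u] mult_right_mono[OF _ Dnorm_nonneg] by (meson order_trans)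
  qed
qed

lemma L1w_antimono: "w \<in> L1w d \<Longrightarrow> 0 \<le> r \<Longrightarrow> r \<le> s \<Longrightarrow> w s \<le> w r"
  unfolding L1w_def by blast

text \<open>With \<open>M = |p| + R\<close>: \<open>dist x p \<le> dist x y + M\<close> and \<open>\<delta> \<le> dist x y\<close> give
  \<open>\<delta> / (\<delta> + M) * dist x p \<le> dist x y\<close>.\<close>
lemma antimono_weight_le_rescaled:
  fixes w :: "real \<Rightarrow> real" and x y p :: "'a::real_normed_vector"
  assumes anti: "\<And>r s. 0 \<le> r \<Longrightarrow> r \<le> s \<Longrightarrow> w s \<le> w r"
    and "0 < \<delta>" "\<delta> \<le> dist x y" "norm y \<le> R"
  shows "w (dist x y) \<le> w (\<delta> / (\<delta> + (norm p + R)) * dist x p)"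
proof (rule anti)
  define M where "M = norm p + R"
  have "M \<ge> 0" using assms(4) norm_ge_zero[of p] norm_ge_zero[of y] unfolding M_def by linarith
  have "dist x p \<le> dist x y + M"
    using dist_triangle[of x p y] norm_triangle_ineq4[of y p] assms(4) by (simp add: dist_norm M_def)
  hence "\<delta> / (\<delta> + M) * dist x p \<le> \<delta> / (\<delta> + M) * (dist x y + M)"
    using \<open>M \<ge> 0\<close> assms(2) by (intro mult_left_mono) auto
  also have "\<dots> \<le> dist x y"
    using \<open>M \<ge> 0\<close> assms(2,3) mult_right_mono[OF assms(3) \<open>M \<ge> 0\<close>] by (simp add: field_simps)
  finally show "\<delta> / (\<delta> + (norm p + R)) * dist x p \<le> dist x y" unfolding M_def .
  show "0 \<le> \<delta> / (\<delta> + (norm p + R)) * dist x p" using \<open>M \<ge> 0\<close> assms(2) by (simp add: M_def)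
qed

lemma ennreal_member_le_infsum:
  fixes f :: "'a \<Rightarrow> ennreal"
  assumes "x \<in> A"
  shows "f x \<le> infsum f A"
proof -
  have "infsum f {x} \<le> infsum f A"
    using assms by (intro infsum_mono_neutral nonneg_summable_on_complete) auto
  thus ?thesis by simp
qed

lemma wnorm1_defect_extension_at_site:
  fixes Lam Lh :: "(real^'d) set" and u :: "real^'d \<Rightarrow> real^'s"
  assumes "0 < \<delta>" and sep: "\<And>x y. x \<in> Lh \<Longrightarrow> y \<in> Lh \<Longrightarrow> x \<noteq> y \<Longrightarrow> \<delta> \<le> dist x y"
    and p0: "p0 \<in> Lam" and D: "finite (Lh - Lam)" "Lh - Lam \<subseteq> cball 0 Rdef" "0 \<le> Rdef"
    and anti: "\<And>r s. 0 \<le> r \<Longrightarrow> r \<le> s \<Longrightarrow> w s \<le> w r"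
    and c0: "c0 = \<delta> / (\<delta> + (norm p0 + Rdef))" and l: "l \<in> Lh" "l \<in> Lam"
  shows "wnorm1 Lh w (defect_extension Lam p0 u) l
    \<le> (1 + of_nat (card (Lh - Lam))) * wnorm1 Lam (\<lambda>t. w (c0 * t)) u l"
proof -
  define f where "f m = ennreal (w (norm (m - l)) * norm (defect_extension Lam p0 u m - u l))" for m
  define g where "g m = ennreal (w (c0 * norm (m - l)) * norm (u m - u l))" for m
  define W where "W = wnorm1 Lam (\<lambda>t. w (c0 * t)) u l"
  have W: "W = infsum g (Lam - {l})" unfolding W_def wnorm1_def g_def ..
  have c01: "0 \<le> c0" "c0 \<le> 1" unfolding c0 using \<open>0 < \<delta>\<close> D(3) norm_ge_zero[of p0] by (auto simp: divide_le_eq_1)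
  have "wnorm1 Lh w (defect_extension Lam p0 u) l = infsum f (Lh \<inter> Lam - {l} \<union> (Lh - Lam))"
    unfolding wnorm1_def f_def defect_extension_def using l by (intro infsum_cong_neutral) auto
  also have "\<dots> = infsum f (Lh \<inter> Lam - {l}) + infsum f (Lh - Lam)"
    by (intro infsum_Un_disjoint nonneg_summable_on_complete) auto
  also have "\<dots> \<le> W + of_nat (card (Lh - Lam)) * W"
  proof (rule add_mono)
    show "infsum f (Lh \<inter> Lam - {l}) \<le> W" unfolding W
    proof (rule infsum_mono_neutral)
      fix m assume "m \<in> (Lh \<inter> Lam - {l}) \<inter> (Lam - {l})"
      moreover have "w (norm (m - l)) \<le> w (c0 * norm (m - l))" using c01 by (intro anti) (auto intro: mult_left_le_one_le)
      ultimately show "f m \<le> g m" unfolding f_def g_def defect_extension_def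
        by (auto intro!: ennreal_leI mult_right_mono)
    qed (auto intro: nonneg_summable_on_complete)
    have "f m \<le> W" if m: "m \<in> Lh - Lam" for m
    proof (cases "p0 = l")
      case False
      have lm: "\<delta> \<le> dist l m" "norm m \<le> Rdef" using sep[OF l(1), of m] m l D(2) by auto
      have "w (dist l m) \<le> w (c0 * dist l p0)"
        unfolding c0 by (rule antimono_weight_le_rescaled[OF anti \<open>0 < \<delta>\<close> lm])
      hence "w (norm (m - l)) \<le> w (c0 * norm (p0 - l))" by (simp add: dist_norm norm_minus_commute)
      hence "f m \<le> g p0" unfolding f_def g_def defect_extension_def using m
        by (auto intro!: ennreal_leI mult_right_mono)
      also have "\<dots> \<le> W" unfolding W using p0 False by (intro ennreal_member_le_infsum) auto
      finally show ?thesis .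
    qed (use m in \<open>simp add: f_def defect_extension_def\<close>)
    hence "sum f (Lh - Lam) \<le> of_nat (card (Lh - Lam)) * W" by (rule sum_bounded_above)
    thus "infsum f (Lh - Lam) \<le> of_nat (card (Lh - Lam)) * W" using D(1) by simp
  qed
  finally show ?thesis unfolding W_def by (simp add: algebra_simps)
qed

lemma wnorm1_defect_extension_at_defect:
  fixes Lam Lh :: "(real^'d) set" and u :: "real^'d \<Rightarrow> real^'s"
  assumes "0 < \<delta>" and sep: "\<And>x y. x \<in> Lh \<Longrightarrow> y \<in> Lh \<Longrightarrow> x \<noteq> y \<Longrightarrow> \<delta> \<le> dist x y"
    and D: "Lh - Lam \<subseteq> cball 0 Rdef"
    and anti: "\<And>r s. 0 \<le> r \<Longrightarrow> r \<le> s \<Longrightarrow> w s \<le> w r"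
    and c0: "c0 = \<delta> / (\<delta> + (norm p0 + Rdef))" and l: "l \<in> Lh - Lam"
  shows "wnorm1 Lh w (defect_extension Lam p0 u) l \<le> wnorm1 Lam (\<lambda>t. w (c0 * t)) u p0"
  unfolding wnorm1_def
proof (rule infsum_mono_neutral)
  fix m assume m: "m \<in> (Lh - {l}) \<inter> (Lam - {p0})"
  hence ml: "\<delta> \<le> dist m l" "norm l \<le> Rdef" using sep[of m l] l D by auto
  have "w (dist m l) \<le> w (c0 * dist m p0)"
    unfolding c0 by (rule antimono_weight_le_rescaled[OF anti \<open>0 < \<delta>\<close> ml])
  thus "ennreal (w (norm (m - l)) * norm (defect_extension Lam p0 u m - defect_extension Lam p0 u l))
    \<le> ennreal (w (c0 * norm (m - p0)) * norm (u m - u p0))"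
    using m l by (auto simp: defect_extension_def dist_norm intro!: ennreal_leI mult_right_mono)
next
  fix m assume "m \<in> (Lh - {l}) - (Lam - {p0})"
  thus "ennreal (w (norm (m - l)) * norm (defect_extension Lam p0 u m - defect_extension Lam p0 u l)) \<le> 0"
    using l by (auto simp: defect_extension_def)
qed (simp_all add: nonneg_summable_on_complete)

lemma sum_wnorm1_defect_extension_le:
  fixes Lam Lh :: "(real^'d) set" and u :: "real^'d \<Rightarrow> real^'s"
  assumes "0 < \<delta>" and sep: "\<And>x y. x \<in> Lh \<Longrightarrow> y \<in> Lh \<Longrightarrow> x \<noteq> y \<Longrightarrow> \<delta> \<le> dist x y"
    and p0: "p0 \<in> Lam" and D: "finite (Lh - Lam)" "Lh - Lam \<subseteq> cball 0 Rdef" "0 \<le> Rdef"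
    and anti: "\<And>r s. 0 \<le> r \<Longrightarrow> r \<le> s \<Longrightarrow> w s \<le> w r"
    and c0: "c0 = \<delta> / (\<delta> + (norm p0 + Rdef))"
    and fin: "finite (Lh \<inter> ball 0 r)" "finite (Lam \<inter> ball 0 R)" and R: "r \<le> R" "norm p0 < R"
    and C: "1 + 2 * real (card (Lh - Lam)) \<le> C"
  shows "(\<Sum>l\<in>Lh \<inter> ball 0 r. wnorm1 Lh w (defect_extension Lam p0 u) l)
    \<le> ennreal C * (\<Sum>l\<in>Lam \<inter> ball 0 R. wnorm1 Lam (\<lambda>t. w (c0 * t)) u l)"
proof -
  let ?P = "wnorm1 Lh w (defect_extension Lam p0 u)" and ?W = "wnorm1 Lam (\<lambda>t. w (c0 * t)) u"
  define S where "S = (\<Sum>l\<in>Lam \<inter> ball 0 R. ?W l)"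
  define n where "n = card (Lh - Lam)"
  have split: "Lh \<inter> ball 0 r = (Lh \<inter> Lam \<inter> ball 0 r) \<union> ((Lh - Lam) \<inter> ball 0 r)" by auto
  have "sum ?P (Lh \<inter> ball 0 r) = sum ?P (Lh \<inter> Lam \<inter> ball 0 r) + sum ?P ((Lh - Lam) \<inter> ball 0 r)"
    by (subst split, rule sum.union_disjoint) (auto intro: finite_subset[OF _ fin(1)])
  also have "\<dots> \<le> (1 + of_nat n) * S + of_nat n * S"
  proof (rule add_mono)
    have "sum ?P (Lh \<inter> Lam \<inter> ball 0 r) \<le> (\<Sum>l\<in>Lh \<inter> Lam \<inter> ball 0 r. (1 + of_nat n) * ?W l)"
      unfolding n_def
      by (intro sum_mono wnorm1_defect_extension_at_site[OF \<open>0 < \<delta>\<close> sep p0 D anti c0]) auto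
    also have "\<dots> \<le> (1 + of_nat n) * S" unfolding S_def sum_distrib_left[symmetric]
      by (intro mult_left_mono sum_mono2[OF fin(2)]) (use R in auto)
    finally show "sum ?P (Lh \<inter> Lam \<inter> ball 0 r) \<le> (1 + of_nat n) * S" .
    have "sum ?P ((Lh - Lam) \<inter> ball 0 r) \<le> of_nat (card ((Lh - Lam) \<inter> ball 0 r)) * ?W p0"
      by (intro sum_bounded_above wnorm1_defect_extension_at_defect[OF \<open>0 < \<delta>\<close> sep D(2) anti c0]) auto
    also have "\<dots> \<le> of_nat n * S"
    proof (rule mult_mono)
      show "of_nat (card ((Lh - Lam) \<inter> ball 0 r)) \<le> (of_nat n :: ennreal)"
        unfolding n_def using D(1) by (simp add: card_mono)
      show "?W p0 \<le> S" unfolding S_def by (rule member_le_sum) (use p0 R fin in auto)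
    qed auto
    finally show "sum ?P ((Lh - Lam) \<inter> ball 0 r) \<le> of_nat n * S" .
  qed
  also have "\<dots> = (1 + 2 * of_nat n) * S" by (simp add: algebra_simps mult_2_right)
  also have "\<dots> = ennreal (1 + 2 * real n) * S"
    by (simp add: ennreal_plus ennreal_mult ennreal_of_nat_eq_real_of_nat)
  also have "\<dots> \<le> ennreal C * S" using C unfolding n_def by (intro mult_right_mono ennreal_leI) auto
  finally show ?thesis unfolding S_def .
qed

theorem mainTheorem18:
  fixes A :: "real^'d^'d" and Lam :: "(real^'d) set" and Rdef :: real
  assumes dim: "CARD('d) \<in> {2, 3}" and dims: "CARD('s) \<in> {2, 3}"
    and A: "invertible A"
    and rc: "RC Lam (hom_lattice A) Rdef"
  shows "\<exists>(I :: (real^'d \<Rightarrow> real^'s) \<Rightarrow> (real^'d \<Rightarrow> real^'s)) (C :: real). C > 0 \<and>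
      (\<forall>u\<in>U12 Lam. \<forall>v\<in>U12 Lam. \<forall>a b. \<forall>l\<in>hom_lattice A.
          I (\<lambda>x. a *\<^sub>R u x + b *\<^sub>R v x) l = a *\<^sub>R I u l + b *\<^sub>R I v l) \<and>
      (\<forall>u\<in>U12 Lam. \<forall>v\<in>U12 Lam. (\<forall>x\<in>Lam. u x = v x) \<longrightarrow> (\<forall>l\<in>hom_lattice A. I u l = I v l)) \<and>
      (\<forall>u\<in>U12 Lam. I u \<in> U12 (hom_lattice A)
          \<and> Dnorm (hom_lattice A) (I u) \<le> C * Dnorm Lam u
          \<and> (\<forall>l\<in>hom_lattice A. norm l > Rdef \<longrightarrow> I u l = u l)) \<and>
      (\<exists>c0. 0 < c0 \<and> c0 \<le> 1 \<and>
        (\<forall>r>0. \<exists>R\<ge>r. \<forall>w\<in>L1w CARD('d). \<forall>u\<in>U12 Lam.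
           (\<Sum>l\<in>hom_lattice A \<inter> ball 0 r. wnorm1 (hom_lattice A) w (I u) l)
             \<le> ennreal C * (\<Sum>l\<in>Lam \<inter> ball 0 R. wnorm1 Lam (\<lambda>t. w (c0 * t)) u l)))"
proof -
  let ?Lh = "hom_lattice A"
  obtain \<rho> where cov: "\<And>a. \<exists>k\<in>?Lh. dist a k \<le> \<rho>" using hom_lattice_covering[OF A] by metis
  obtain \<delta> where sep: "\<delta> > 0" "\<And>x y. x \<in> ?Lh \<Longrightarrow> y \<in> ?Lh \<Longrightarrow> x \<noteq> y \<Longrightarrow> \<delta> \<le> dist x y"
    using hom_lattice_separated[OF A] by metis
  have lfh: "finite (?Lh \<inter> cball 0 R)" for R using hom_lattice_locally_finite[OF A] .
  have lf: "finite (Lam \<inter> cball 0 R)" for R using RC_locally_finite[OF rc lfh] .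
  obtain p0 where p0: "p0 \<in> Lam" using RC_site_exists[OF rc cov] .
  obtain C1 where C1: "\<And>(u::real^'d \<Rightarrow> real^'s) C. u \<in> U12 Lam \<Longrightarrow> C1 \<le> C \<Longrightarrow>
      defect_extension Lam p0 u \<in> U12 ?Lh \<and> Dnorm ?Lh (defect_extension Lam p0 u) \<le> C * Dnorm Lam u"
    using Dnorm_defect_extension[OF rc cov lfh p0] by metis
  have D: "finite (?Lh - Lam)" "?Lh - Lam \<subseteq> cball 0 Rdef" "0 \<le> Rdef"
    using RC_defects[OF rc lfh] rc unfolding RC_def by auto
  define C where "C = max C1 (1 + 2 * real (card (?Lh - Lam)))"
  define c0 where "c0 = \<delta> / (\<delta> + (norm p0 + Rdef))"
  have c0: "0 < c0" "c0 \<le> 1" unfolding c0_def using sep(1) D(3) norm_ge_zero[of p0]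
    by (auto intro!: divide_pos_pos add_pos_nonneg simp: divide_le_eq_1)
  have radius: "\<exists>R\<ge>r. \<forall>w\<in>L1w CARD('d). \<forall>u\<in>U12 Lam :: (real^'d \<Rightarrow> real^'s) set.
      (\<Sum>l\<in>?Lh \<inter> ball 0 r. wnorm1 ?Lh w (defect_extension Lam p0 u) l)
        \<le> ennreal C * (\<Sum>l\<in>Lam \<inter> ball 0 R. wnorm1 Lam (\<lambda>t. w (c0 * t)) u l)" for r
  proof (intro exI[of _ "max r (norm p0 + 1)"] conjI ballI)
    fix w assume "w \<in> L1w CARD('d)"
    show "(\<Sum>l\<in>?Lh \<inter> ball 0 r. wnorm1 ?Lh w (defect_extension Lam p0 u) l)
        \<le> ennreal C * (\<Sum>l\<in>Lam \<inter> ball 0 (max r (norm p0 + 1)). wnorm1 Lam (\<lambda>t. w (c0 * t)) u l)" for u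
      by (rule sum_wnorm1_defect_extension_le[OF sep p0 D L1w_antimono[OF \<open>w \<in> L1w CARD('d)\<close>] c0_def
          finite_subset[OF _ lfh[of r]] finite_subset[OF _ lf[of "max r (norm p0 + 1)"]]]) (auto simp: C_def)
  qed simp
  show ?thesis
  proof (rule exI[of _ "defect_extension Lam p0"], rule exI[of _ C], intro conjI exI[of _ c0])
  qed (use C1 c0 radius p0 RC_outside_iff[OF rc] in \<open>auto simp: C_def defect_extension_def\<close>)
qed

end
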